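(* Let $f(z)=z+a_2z^2+a_3z^3+\cdots$ belong to the class $\mathcal{S}_G^{\ast}$. Then the following sharp estimates hold: $$|a_3-\mu a_2^2|\le \frac14\max\left\{1,\left|\mu-\frac13\right|\right\}\quad(\mu\in\mathbb{C}),$$ $$|a_2a_3-a_4|\le\frac16,\qquad |a_2a_4-a_3^2|\le\frac1{16}.$$
   Context: Let $\mathcal{U}=\{z\in\mathbb{C}:|z|<1\}$. Let $\mathcal{S}$ denote the class of functions $f$ analytic and univalent in $\mathcal{U}$ normalized by $f(0)=0$, $f'(0)=1$, i.e. $f(z)=z+\sum_{n\ge2}a_nz^n$. For analytic $g,h$ on $\mathcal{U}$, $g\prec h$ means there is an analytic $w$ on $\mathcal{U}$ with $w(0)=0$, $|w(z)|<1$, and $g(z)=h(w(z))$ for $z\in\mathcal{U}$. Let $\Psi(z)=\frac{z}{\ln(1+z)}$ on $\mathcal{U}$ (principal branch, $\Psi(0)=1$), the generating function of the Gregory coefficients. Define $\mathcal{S}_G^{\ast}=\{f\in\mathcal{S}: zf'(z)/f(z)\prec\Psi(z)\}$. "Sharp" means the bound is attained by some function in $\mathcal{S}_G^{\ast}$. *)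

theory Defs
  imports "HOL-Complex_Analysis.Complex_Analysis"
begin

definition unit_disc :: "complex set" where
  "unit_disc = ball 0 1"

definition classS :: "(complex \<Rightarrow> complex) \<Rightarrow> bool" where
  "classS f \<longleftrightarrow> f holomorphic_on unit_disc \<and> inj_on f unit_disc \<and>
     f 0 = 0 \<and> deriv f 0 = 1"

definition taylor_coeff :: "(complex \<Rightarrow> complex) \<Rightarrow> nat \<Rightarrow> complex" where
  "taylor_coeff f n = (deriv ^^ n) f 0 / of_nat (fact n)"

definition subordinate :: "(complex \<Rightarrow> complex) \<Rightarrow> (complex \<Rightarrow> complex) \<Rightarrow> bool" where
  "subordinate g h \<longleftrightarrow> (\<exists>w. w holomorphic_on unit_disc \<and> w 0 = 0 \<and>
      (\<forall>z\<in>unit_disc. norm (w z) < 1) \<and> (\<forall>z\<in>unit_disc. g z = h (w z)))"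

text \<open>Generating function of Gregory coefficients, z / Log(1+z), extended by 1 at 0.\<close>
definition Psi :: "complex \<Rightarrow> complex" where
  "Psi z = (if z = 0 then 1 else z / Ln (1 + z))"

definition starlike_quot :: "(complex \<Rightarrow> complex) \<Rightarrow> complex \<Rightarrow> complex" where
  "starlike_quot f z = (if z = 0 then 1 else z * deriv f z / f z)"

definition SG_star :: "(complex \<Rightarrow> complex) \<Rightarrow> bool" where
  "SG_star f \<longleftrightarrow> classS f \<and> subordinate (starlike_quot f) Psi"

end

(*
  If f belongs to SG_star, then z f'(z)/f(z) = Psi(w(z)) for a Schwarz function
  w(z) = c1 z + c2 z^2 + c3 z^3 + ...  Since Psi(z) = 1 + z/2 - z^2/12 + z^3/24 + ... (the Gregory
  coefficients), comparing Taylor coefficients gives a2 = c1/2, a3 = c2/4 + c1^2/12 and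
  a4 = c3/6 + 5 c1 c2/72 + c1^3/72, so each functional is a polynomial in c1, c2, c3.  It is bounded
  with |c1| <= 1, |c2| <= 1 - |c1|^2 and Carlson's |c3| <= 1 - |c1|^2 - |c2|^2/(1 + |c1|), which follow
  from the Schwarz lemma applied to w and to its Schur transform (w/z - c1)/(1 - conj c1 w/z), together
  with elementary real inequalities.  Equality holds for the functions with z f'/f = Psi(z^k),
  k = 1, 2, 3; they exist and are univalent because Re Psi > 0 on the disc.
*)

theory Submission
  imports Defs
begin

lemma fps_nth_compose_le_3:
  fixes F W :: "'a::comm_ring_1 fps"
  assumes W0: "fps_nth W 0 = 0"
  shows "fps_nth (F oo W) 1 = fps_nth F 1 * fps_nth W 1"
    and "fps_nth (F oo W) 2 = fps_nth F 1 * fps_nth W 2 + fps_nth F 2 * fps_nth W 1 ^ 2"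
    and "fps_nth (F oo W) 3 = fps_nth F 1 * fps_nth W 3
           + 2 * fps_nth F 2 * fps_nth W 1 * fps_nth W 2 + fps_nth F 3 * fps_nth W 1 ^ 3"
proof -
  have upto: "{0..1::nat} = {0, 1}" "{0..2::nat} = {0, 1, 2}" "{0..3::nat} = {0, 1, 2, 3}"
    by auto
  have W2: "fps_nth (W ^ 2) 0 = 0" "fps_nth (W ^ 2) (Suc 0) = 0" "fps_nth (W ^ 2) 2 = fps_nth W 1 ^ 2"
    "fps_nth (W ^ 2) 3 = 2 * fps_nth W 1 * fps_nth W 2"
    unfolding power2_eq_square fps_mult_nth upto by (simp_all add: W0 algebra_simps)
  have cube: "W ^ 3 = W * W ^ 2"
    by (simp add: power2_eq_square power3_eq_cube mult.assoc)
  have W3: "fps_nth (W ^ 3) 1 = 0" "fps_nth (W ^ 3) 2 = 0" "fps_nth (W ^ 3) 3 = fps_nth W 1 ^ 3"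
    unfolding cube fps_mult_nth upto by (simp_all add: W0 W2) (simp add: power2_eq_square power3_eq_cube)
  show "fps_nth (F oo W) 1 = fps_nth F 1 * fps_nth W 1"
    and "fps_nth (F oo W) 2 = fps_nth F 1 * fps_nth W 2 + fps_nth F 2 * fps_nth W 1 ^ 2"
    and "fps_nth (F oo W) 3 = fps_nth F 1 * fps_nth W 3
           + 2 * fps_nth F 2 * fps_nth W 1 * fps_nth W 2 + fps_nth F 3 * fps_nth W 1 ^ 3"
    unfolding fps_compose_nth upto by (simp_all add: W0 W2 W3 algebra_simps)
qed

lemma has_fps_expansion_unique_eventually:
  fixes f g :: "complex \<Rightarrow> complex"
  assumes "f has_fps_expansion F" "g has_fps_expansion G"
    and "eventually (\<lambda>z. f z = g z) (nhds 0)"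
  shows "F = G"
proof -
  have "g has_fps_expansion F"
    using has_fps_expansion_cong[OF assms(3) refl] assms(1) by blast
  then show ?thesis
    using assms(2) by (rule fps_expansion_unique_complex)
qed

lemma taylor_coeff_eq_fps_nth:
  "f has_fps_expansion F \<Longrightarrow> taylor_coeff f n = fps_nth F n"
  using fps_nth_fps_expansion[of f F n] by (simp add: taylor_coeff_def)

lemma holomorphic_on_unit_disc_has_fps_expansion:
  "f holomorphic_on unit_disc \<Longrightarrow> f has_fps_expansion fps_expansion f 0"
  by (rule has_fps_expansion_fps_expansion) (auto simp: unit_disc_def)

lemma open_unit_disc: "open unit_disc"
  by (simp add: unit_disc_def)

lemma eventually_in_unit_disc: "eventually (\<lambda>z. z \<in> unit_disc) (nhds 0)"
  by (rule eventually_nhds_in_open) (auto simp: unit_disc_def)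

section \<open>The Gregory series\<close>

lemma has_fps_expansion_Ln_1_plus: "(\<lambda>z. Ln (1 + z)) has_fps_expansion fps_ln 1"
proof (rule has_fps_expansionI)
  have "eventually (\<lambda>u::complex. norm u < 1) (nhds 0)"
    using eventually_in_unit_disc by (simp add: unit_disc_def)
  then show "eventually (\<lambda>u. (\<lambda>n. fps_nth (fps_ln 1) n * u ^ n) sums Ln (1 + u)) (nhds 0)"
  proof eventually_elim
    case (elim u)
    have "(\<lambda>n. - ((-u) ^ n) / of_nat n) = (\<lambda>n. fps_nth (fps_ln 1) n * u ^ n)"
    proof
      fix n :: nat
      show "- ((-u) ^ n) / of_nat n = fps_nth (fps_ln 1) n * u ^ n"
        by (cases n) (simp_all add: fps_ln_nth power_minus')
    qed
    with Ln_series'[OF elim] show ?case by simp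
  qed
qed

definition gregory_fps :: "complex fps" where
  "gregory_fps = fps_X / fps_ln 1"

lemma subdegree_fps_ln_1: "subdegree (fps_ln (1::complex)) = 1"
  by (rule subdegreeI) (simp_all add: fps_ln_nth)

lemma fps_ln_1_nonzero: "fps_ln (1::complex) \<noteq> 0"
  using subdegree_fps_ln_1 by auto

lemma has_fps_expansion_Psi: "Psi has_fps_expansion gregory_fps"
proof -
  have "(\<lambda>z. if z = 0 then 1 else z / Ln (1 + z)) has_fps_expansion gregory_fps"
    unfolding gregory_fps_def
    by (rule has_fps_expansion_divide[OF has_fps_expansion_fps_X has_fps_expansion_Ln_1_plus])
      (simp_all add: subdegree_fps_ln_1 fps_ln_1_nonzero fps_ln_nth)
  then show ?thesis
    by (simp add: Psi_def[abs_def])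
qed

lemma gregory_fps_nth:
  "fps_nth gregory_fps 0 = 1" "fps_nth gregory_fps 1 = 1/2"
  "fps_nth gregory_fps 2 = -1/12" "fps_nth gregory_fps 3 = 1/24"
proof -
  have "gregory_fps * fps_ln 1 = fps_X"
    unfolding gregory_fps_def
    by (rule fps_times_divide_eq) (simp_all add: subdegree_fps_ln_1 fps_ln_1_nonzero fps_ln_nth)
  then have coeff: "(\<Sum>i=0..n. fps_nth gregory_fps i * fps_nth (fps_ln 1) (n - i)) = fps_nth fps_X n" for n
    by (metis fps_mult_nth)
  have upto: "{0..1::nat} = {0, 1}" "{0..2::nat} = {0, 1, 2}" "{0..3::nat} = {0, 1, 2, 3}"
    "{0..4::nat} = {0, 1, 2, 3, 4}"
    by auto
  from coeff[of 1] show G0: "fps_nth gregory_fps 0 = 1"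
    by (simp add: upto fps_ln_nth)
  from coeff[of 2] G0 show G1: "fps_nth gregory_fps 1 = 1/2"
    by (simp add: upto fps_ln_nth)
  from coeff[of 3] G0 G1[unfolded One_nat_def] show G2: "fps_nth gregory_fps 2 = -1/12"
    by (simp add: upto fps_ln_nth) (simp add: field_simps add_eq_0_iff)
  from coeff[of 4] G0 G1[unfolded One_nat_def] G2 show "fps_nth gregory_fps 3 = 1/24"
    by (simp add: upto fps_ln_nth)
qed

section \<open>Schwarz functions\<close>

definition schwarz_function :: "(complex \<Rightarrow> complex) \<Rightarrow> bool" where
  "schwarz_function w \<longleftrightarrow>
     w holomorphic_on unit_disc \<and> w 0 = 0 \<and> (\<forall>z\<in>unit_disc. norm (w z) < 1)"

lemma schwarz_functionD:
  assumes "schwarz_function w"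
  shows "w holomorphic_on ball 0 1" "w 0 = 0" "\<And>z. norm z < 1 \<Longrightarrow> norm (w z) < 1"
  using assms by (auto simp: schwarz_function_def unit_disc_def)

lemma schwarz_function_has_fps_expansion:
  "schwarz_function w \<Longrightarrow> w has_fps_expansion fps_expansion w 0"
  by (simp add: schwarz_function_def holomorphic_on_unit_disc_has_fps_expansion)

lemma norm_taylor_coeff_1_le:
  assumes "schwarz_function w" shows "norm (taylor_coeff w 1) \<le> 1"
  using Schwarz_Lemma(2)[OF schwarz_functionD[OF assms], of 0] by (simp add: taylor_coeff_def)

lemma schwarz_function_extremal:
  assumes w: "schwarz_function w"
    and extremal: "norm (taylor_coeff w 1) = 1 \<or> (\<exists>z. norm z < 1 \<and> z \<noteq> 0 \<and> norm (w z) = norm z)"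
  shows "norm (taylor_coeff w 1) = 1" and "n \<noteq> 1 \<Longrightarrow> taylor_coeff w n = 0"
proof -
  have "\<exists>\<alpha>. (\<forall>z. norm z < 1 \<longrightarrow> w z = \<alpha> * z) \<and> norm \<alpha> = 1"
    by (rule Schwarz_Lemma(3)[OF schwarz_functionD[OF w], of 0])
      (use extremal in \<open>auto simp: taylor_coeff_def\<close>)
  then obtain \<alpha> where \<alpha>: "\<forall>z. norm z < 1 \<longrightarrow> w z = \<alpha> * z" "norm \<alpha> = 1"
    by blast
  have "eventually (\<lambda>z. \<alpha> * z = w z) (nhds 0)"
    using eventually_in_unit_disc by eventually_elim (simp add: \<alpha> unit_disc_def)
  moreover have "(\<lambda>z. \<alpha> * z) has_fps_expansion fps_const \<alpha> * fps_X"
    by (intro fps_expansion_intros)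
  ultimately have "w has_fps_expansion fps_const \<alpha> * fps_X"
    using has_fps_expansion_cong by blast
  then have "taylor_coeff w n = (if n = 1 then \<alpha> else 0)" for n
    by (simp add: taylor_coeff_eq_fps_nth)
  then show "norm (taylor_coeff w 1) = 1" and "n \<noteq> 1 \<Longrightarrow> taylor_coeff w n = 0"
    using \<alpha>(2) by simp_all
qed

lemma schwarz_function_norm_less:
  assumes w: "schwarz_function w" and "norm (taylor_coeff w 1) < 1" "norm z < 1" "z \<noteq> 0"
  shows "norm (w z) < norm z"
  using Schwarz_Lemma(1)[OF schwarz_functionD[OF w] \<open>norm z < 1\<close>]
    schwarz_function_extremal(1)[OF w] assms(2-4)
  by fastforce

lemma schwarz_function_divide_z:
  assumes w: "schwarz_function w" and c1: "norm (taylor_coeff w 1) < 1"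
  obtains \<phi> where "\<phi> holomorphic_on unit_disc" "\<And>z. z \<in> unit_disc \<Longrightarrow> norm (\<phi> z) < 1"
    "\<And>n. taylor_coeff \<phi> n = taylor_coeff w (Suc n)"
proof -
  note w' = schwarz_functionD[OF w]
  define \<phi> where "\<phi> = (\<lambda>z. if z = 0 then deriv w 0 else (w z - w 0) / (z - 0))"
  have holo: "\<phi> holomorphic_on unit_disc"
    unfolding \<phi>_def unit_disc_def by (rule pole_lemma[OF w'(1)]) auto
  have w_eq: "w = (\<lambda>z. z * \<phi> z)"
    by (auto simp: \<phi>_def w'(2))
  have less: "norm (\<phi> z) < 1" if "z \<in> unit_disc" for z
  proof (cases "z = 0")
    case True
    then show ?thesis using c1 by (simp add: \<phi>_def taylor_coeff_def)
  next
    case False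
    then have "norm (w z) < norm z"
      using schwarz_function_norm_less[OF w c1] that by (simp add: unit_disc_def)
    with False show ?thesis
      by (simp add: \<phi>_def w'(2) norm_divide divide_less_eq)
  qed
  have "w has_fps_expansion fps_X * fps_expansion \<phi> 0"
    unfolding w_eq
    by (intro fps_expansion_intros holomorphic_on_unit_disc_has_fps_expansion holo)
  then have "taylor_coeff \<phi> n = taylor_coeff w (Suc n)" for n
    by (simp add: taylor_coeff_eq_fps_nth holomorphic_on_unit_disc_has_fps_expansion[OF holo])
  with holo less show ?thesis
    using that by blast
qed

lemma schur_transform:
  assumes holo: "\<phi> holomorphic_on unit_disc" and less: "\<And>z. z \<in> unit_disc \<Longrightarrow> norm (\<phi> z) < 1"
  defines "c \<equiv> \<phi> 0"
  obtains v where "schwarz_function v"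
    "of_real (1 - norm c ^ 2) * taylor_coeff v 1 = taylor_coeff \<phi> 1"
    "of_real (1 - norm c ^ 2) * taylor_coeff v 2
       = taylor_coeff \<phi> 2 + cnj c * taylor_coeff \<phi> 1 * taylor_coeff v 1"
proof -
  have c: "norm c < 1"
    using less[of 0] by (simp add: c_def unit_disc_def)
  define v where "v = (\<lambda>z. Moebius_function 0 c (\<phi> z))"
  have "(Moebius_function 0 c \<circ> \<phi>) holomorphic_on unit_disc"
    using less by (intro holomorphic_on_compose_gen[OF holo Moebius_function_holomorphic[OF c]])
      (auto simp: unit_disc_def)
  then have v: "schwarz_function v"
    using Moebius_function_norm_lt_1[OF c less]
    by (simp add: schwarz_function_def v_def o_def c_def Moebius_function_eq_zero)
  define \<Phi> V where "\<Phi> = fps_expansion \<phi> 0" and "V = fps_expansion v 0"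
  have \<Phi>: "\<phi> has_fps_expansion \<Phi>" and V: "v has_fps_expansion V"
    using holomorphic_on_unit_disc_has_fps_expansion holo v
    by (auto simp: \<Phi>_def V_def schwarz_function_def)
  have "eventually (\<lambda>z. v z * (1 - cnj c * \<phi> z) = \<phi> z - c) (nhds 0)"
    using eventually_in_unit_disc
  proof eventually_elim
    case (elim z)
    have "norm (cnj c * \<phi> z) < 1"
      using mult_left_le_one_le[of "norm (\<phi> z)" "norm c"] c less[OF elim] by (simp add: norm_mult)
    then have "1 - cnj c * \<phi> z \<noteq> 0"
      by auto
    then show ?case
      by (simp add: v_def Moebius_function_simple)
  qed
  moreover have "(\<lambda>z. v z * (1 - cnj c * \<phi> z)) has_fps_expansion V * (1 - fps_const (cnj c) * \<Phi>)"
    and "(\<lambda>z. \<phi> z - c) has_fps_expansion \<Phi> - fps_const c"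
    by (intro fps_expansion_intros V \<Phi>)+
  ultimately have eq: "V * (1 - fps_const (cnj c) * \<Phi>) = \<Phi> - fps_const c"
    by (rule has_fps_expansion_unique_eventually[rotated 2])
  have V0: "fps_nth V 0 = 0" and \<Phi>0: "fps_nth \<Phi> 0 = c"
    using V \<Phi> v by (simp_all add: fps_nth_fps_expansion schwarz_function_def c_def)
  have D: "1 - cnj c * c = of_real (1 - norm c ^ 2)"
    using complex_norm_square[of c] by (simp add: mult.commute)
  have upto: "{0..1::nat} = {0, 1}" "{0..2::nat} = {0, 1, 2}"
    by auto
  from arg_cong[OF eq, of "\<lambda>F. fps_nth F 1"] arg_cong[OF eq, of "\<lambda>F. fps_nth F 2"]
  have "(1 - cnj c * c) * fps_nth V 1 = fps_nth \<Phi> 1"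
    and "(1 - cnj c * c) * fps_nth V 2 = fps_nth \<Phi> 2 + cnj c * fps_nth \<Phi> 1 * fps_nth V 1"
    by (simp_all add: fps_mult_nth upto V0 \<Phi>0 algebra_simps numeral_2_eq_2)
  then have "of_real (1 - norm c ^ 2) * fps_nth V 1 = fps_nth \<Phi> 1"
    and "of_real (1 - norm c ^ 2) * fps_nth V 2 = fps_nth \<Phi> 2 + cnj c * fps_nth \<Phi> 1 * fps_nth V 1"
    unfolding D .
  then show ?thesis
    by (intro that[OF v]) (simp_all add: taylor_coeff_eq_fps_nth[OF V] taylor_coeff_eq_fps_nth[OF \<Phi>])
qed

lemma schwarz_function_schur_step:
  assumes w: "schwarz_function w" and c1: "norm (taylor_coeff w 1) < 1"
  obtains v where "schwarz_function v"
    "of_real (1 - norm (taylor_coeff w 1) ^ 2) * taylor_coeff v 1 = taylor_coeff w 2"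
    "of_real (1 - norm (taylor_coeff w 1) ^ 2) * taylor_coeff v 2
       = taylor_coeff w 3 + cnj (taylor_coeff w 1) * taylor_coeff w 2 * taylor_coeff v 1"
proof -
  obtain \<phi> where \<phi>: "\<phi> holomorphic_on unit_disc" "\<And>z. z \<in> unit_disc \<Longrightarrow> norm (\<phi> z) < 1"
    and coeff: "\<And>n. taylor_coeff \<phi> n = taylor_coeff w (Suc n)"
    using schwarz_function_divide_z[OF w c1] by blast
  have c0: "\<phi> 0 = taylor_coeff w 1"
    using coeff[of 0] by (simp add: taylor_coeff_def)
  have c12: "taylor_coeff \<phi> 1 = taylor_coeff w 2" "taylor_coeff \<phi> 2 = taylor_coeff w 3"
    using coeff[of 1] coeff[of 2] by (simp_all add: numeral_eq_Suc)
  obtain v where "schwarz_function v"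
    "of_real (1 - norm (\<phi> 0) ^ 2) * taylor_coeff v 1 = taylor_coeff \<phi> 1"
    "of_real (1 - norm (\<phi> 0) ^ 2) * taylor_coeff v 2
       = taylor_coeff \<phi> 2 + cnj (\<phi> 0) * taylor_coeff \<phi> 1 * taylor_coeff v 1"
    using schur_transform[OF \<phi>] by blast
  then show ?thesis
    unfolding c0 c12 by (rule that)
qed

lemma schwarz_function_taylor_coeff_2_le:
  assumes w: "schwarz_function w"
  shows "norm (taylor_coeff w 2) \<le> 1 - norm (taylor_coeff w 1) ^ 2"
proof (cases "norm (taylor_coeff w 1) = 1")
  case True
  then show ?thesis
    using schwarz_function_extremal(2)[OF w disjI1[OF True], of 2] by simp
next
  case False
  define D where "D = 1 - norm (taylor_coeff w 1) ^ 2"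
  have c1: "norm (taylor_coeff w 1) < 1"
    using False norm_taylor_coeff_1_le[OF w] by simp
  then have "0 \<le> D"
    by (simp add: D_def power_le_one)
  obtain v where v: "schwarz_function v" "of_real D * taylor_coeff v 1 = taylor_coeff w 2"
    using schwarz_function_schur_step[OF w c1] unfolding D_def by blast
  have "norm (taylor_coeff w 2) = D * norm (taylor_coeff v 1)"
    using \<open>0 \<le> D\<close> by (simp flip: v(2) add: norm_mult)
  also have "\<dots> \<le> D"
    using mult_left_mono[OF norm_taylor_coeff_1_le[OF v(1)] \<open>0 \<le> D\<close>] by simp
  finally show ?thesis
    by (simp add: D_def)
qed

lemma schwarz_function_taylor_coeff_3_le:
  assumes w: "schwarz_function w"
  shows "norm (taylor_coeff w 3)
           \<le> 1 - norm (taylor_coeff w 1) ^ 2 - norm (taylor_coeff w 2) ^ 2 / (1 + norm (taylor_coeff w 1))"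
proof (cases "norm (taylor_coeff w 1) = 1")
  case True
  then show ?thesis
    using schwarz_function_extremal(2)[OF w disjI1[OF True]] by simp
next
  case False
  define x y D where "x = norm (taylor_coeff w 1)" and "y = norm (taylor_coeff w 2)"
    and "D = 1 - x ^ 2"
  have c1: "norm (taylor_coeff w 1) < 1"
    using False norm_taylor_coeff_1_le[OF w] by simp
  then have x: "0 \<le> x" "x < 1" and "0 < D"
    by (simp_all add: x_def D_def power_less_one_iff abs_square_less_1)
  obtain v where v: "schwarz_function v" "of_real D * taylor_coeff v 1 = taylor_coeff w 2"
    "of_real D * taylor_coeff v 2
       = taylor_coeff w 3 + cnj (taylor_coeff w 1) * taylor_coeff w 2 * taylor_coeff v 1"
    using schwarz_function_schur_step[OF w c1] unfolding D_def x_def by blast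
  define t where "t = norm (taylor_coeff v 1)"
  have y: "y = t * D"
    using \<open>0 < D\<close> by (simp flip: v(2) add: y_def t_def norm_mult)
  have "taylor_coeff w 3
          = of_real D * taylor_coeff v 2 - cnj (taylor_coeff w 1) * taylor_coeff w 2 * taylor_coeff v 1"
    using v(3) by simp
  then have "norm (taylor_coeff w 3) \<le> D * norm (taylor_coeff v 2) + x * y * t"
    using norm_triangle_ineq4[of "of_real D * taylor_coeff v 2"
        "cnj (taylor_coeff w 1) * taylor_coeff w 2 * taylor_coeff v 1"] \<open>0 < D\<close>
    by (simp add: norm_mult x_def y_def t_def)
  also have "\<dots> \<le> D * (1 - t ^ 2) + x * y * t"
    using schwarz_function_taylor_coeff_2_le[OF v(1)] \<open>0 < D\<close> by (simp add: t_def)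
  also have "\<dots> = 1 - x ^ 2 - y ^ 2 / (1 + x)"
    using x unfolding y D_def by (simp add: field_simps power2_eq_square)
  finally show ?thesis
    by (simp add: x_def y_def)
qed

lemma schwarz_function_fekete_szego:
  assumes w: "schwarz_function w"
  shows "norm (taylor_coeff w 2 - \<nu> * taylor_coeff w 1 ^ 2) \<le> max 1 (norm \<nu>)"
proof -
  define x where "x = norm (taylor_coeff w 1)"
  have "x ^ 2 \<le> 1"
    using norm_taylor_coeff_1_le[OF w] by (simp add: x_def power_le_one)
  have "norm (taylor_coeff w 2 - \<nu> * taylor_coeff w 1 ^ 2) \<le> norm (taylor_coeff w 2) + norm \<nu> * x ^ 2"
    using norm_triangle_ineq4[of "taylor_coeff w 2" "\<nu> * taylor_coeff w 1 ^ 2"]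
    by (simp add: norm_mult norm_power x_def)
  also have "\<dots> \<le> (1 - x ^ 2) * 1 + x ^ 2 * norm \<nu>"
    using schwarz_function_taylor_coeff_2_le[OF w] by (simp add: x_def)
  also have "\<dots> \<le> max 1 (norm \<nu>)"
    using \<open>x ^ 2 \<le> 1\<close> by (intro convex_bound_le) auto
  finally show ?thesis .
qed

lemma SG_star_iff_schwarz_function:
  "SG_star f \<longleftrightarrow>
     classS f \<and> (\<exists>w. schwarz_function w \<and> (\<forall>z\<in>unit_disc. starlike_quot f z = Psi (w z)))"
  by (auto simp: SG_star_def subordinate_def schwarz_function_def)

lemma classS_starlike_quot_fps:
  assumes f: "classS f" and P: "p has_fps_expansion P"
    and quot: "\<forall>z\<in>unit_disc. starlike_quot f z = p z"
  shows "fps_X * fps_deriv (fps_expansion f 0) = fps_expansion f 0 * P"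
proof -
  have holo: "f holomorphic_on unit_disc" and inj: "inj_on f unit_disc" and "f 0 = 0"
    using f by (auto simp: classS_def)
  have "eventually (\<lambda>z. z * deriv f z = f z * p z) (nhds 0)"
    using eventually_in_unit_disc
  proof eventually_elim
    case (elim z)
    show ?case
    proof (cases "z = 0")
      case True
      then show ?thesis using \<open>f 0 = 0\<close> by simp
    next
      case False
      have "0 \<in> unit_disc"
        by (simp add: unit_disc_def)
      with False elim inj \<open>f 0 = 0\<close> have "f z \<noteq> 0"
        by (metis inj_onD)
      moreover have "starlike_quot f z = p z"
        using quot elim by blast
      ultimately show ?thesis
        using False by (simp add: starlike_quot_def field_simps)
    qed
  qed
  moreover have "(\<lambda>z. z * deriv f z) has_fps_expansion fps_X * fps_deriv (fps_expansion f 0)"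
    and "(\<lambda>z. f z * p z) has_fps_expansion fps_expansion f 0 * P"
    by (intro fps_expansion_intros holomorphic_on_unit_disc_has_fps_expansion holo P)+
  ultimately show ?thesis
    by (rule has_fps_expansion_unique_eventually[rotated 2])
qed

lemma classS_taylor_coeff_recursion:
  assumes f: "classS f" and P: "p has_fps_expansion P"
    and quot: "\<forall>z\<in>unit_disc. starlike_quot f z = p z"
  shows "taylor_coeff f 2 = fps_nth P 1"
    and "2 * taylor_coeff f 3 = fps_nth P 2 + fps_nth P 1 * taylor_coeff f 2"
    and "3 * taylor_coeff f 4
           = fps_nth P 3 + fps_nth P 2 * taylor_coeff f 2 + fps_nth P 1 * taylor_coeff f 3"
proof -
  define a where "a = fps_expansion f 0"
  have coeff: "taylor_coeff f n = fps_nth a n" for n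
    by (simp add: a_def taylor_coeff_def fps_expansion_def)
  have a01: "fps_nth a 0 = 0" "fps_nth a (Suc 0) = 1"
    using f by (simp_all add: a_def fps_expansion_def classS_def)
  have "p 0 = 1"
    using quot[rule_format, of 0] by (simp add: starlike_quot_def unit_disc_def)
  then have P0: "fps_nth P 0 = 1"
    using fps_nth_fps_expansion[OF P, of 0] by simp
  have eq: "of_nat n * fps_nth a n = (\<Sum>i=0..n. fps_nth a i * fps_nth P (n - i))" for n
    using arg_cong[OF classS_starlike_quot_fps[OF f P quot], of "\<lambda>G. fps_nth G n"]
    unfolding fps_mult_fps_X_deriv_shift fps_mult_nth a_def by simp
  have upto: "{0..2::nat} = {0, 1, 2}" "{0..3::nat} = {0, 1, 2, 3}" "{0..4::nat} = {0, 1, 2, 3, 4}"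
    by auto
  show a2: "taylor_coeff f 2 = fps_nth P 1"
    using eq[of 2] by (simp add: coeff upto a01 P0)
  show a3: "2 * taylor_coeff f 3 = fps_nth P 2 + fps_nth P 1 * taylor_coeff f 2"
    using eq[of 3] by (simp add: coeff upto a01 P0 algebra_simps)
  show "3 * taylor_coeff f 4
          = fps_nth P 3 + fps_nth P 2 * taylor_coeff f 2 + fps_nth P 1 * taylor_coeff f 3"
    using eq[of 4] by (simp add: coeff upto a01 P0 algebra_simps)
qed

lemma taylor_coeffs_of_Psi_subordinate:
  assumes f: "classS f" and w: "schwarz_function w"
    and quot: "\<forall>z\<in>unit_disc. starlike_quot f z = Psi (w z)"
  shows "taylor_coeff f 2 = taylor_coeff w 1 / 2"
    and "taylor_coeff f 3 = taylor_coeff w 2 / 4 + taylor_coeff w 1 ^ 2 / 12"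
    and "taylor_coeff f 4 = taylor_coeff w 3 / 6 + 5/72 * taylor_coeff w 1 * taylor_coeff w 2
                             + taylor_coeff w 1 ^ 3 / 72"
proof -
  define W where "W = fps_expansion w 0"
  have W: "w has_fps_expansion W"
    unfolding W_def by (rule schwarz_function_has_fps_expansion[OF w])
  have W0: "fps_nth W 0 = 0"
    using w fps_nth_fps_expansion[OF W, of 0] by (simp add: schwarz_function_def)
  have "(Psi \<circ> w) has_fps_expansion (gregory_fps oo W)"
    by (rule has_fps_expansion_compose[OF has_fps_expansion_Psi W W0])
  then have P: "(\<lambda>z. Psi (w z)) has_fps_expansion (gregory_fps oo W)"
    by (simp add: o_def)
  have p: "fps_nth (gregory_fps oo W) 1 = taylor_coeff w 1 / 2"
    "fps_nth (gregory_fps oo W) 2 = taylor_coeff w 2 / 2 - taylor_coeff w 1 ^ 2 / 12"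
    "fps_nth (gregory_fps oo W) 3 = taylor_coeff w 3 / 2 - taylor_coeff w 1 * taylor_coeff w 2 / 6
                                     + taylor_coeff w 1 ^ 3 / 24"
    using fps_nth_compose_le_3[OF W0, of gregory_fps]
    unfolding gregory_fps_nth taylor_coeff_eq_fps_nth[OF W] by simp_all
  note rec = classS_taylor_coeff_recursion[OF f P quot, unfolded p]
  show a2: "taylor_coeff f 2 = taylor_coeff w 1 / 2"
    using rec(1) .
  have "taylor_coeff f 3 = (2 * taylor_coeff f 3) / 2"
    by simp
  also have "\<dots> = taylor_coeff w 2 / 4 + taylor_coeff w 1 ^ 2 / 12"
    unfolding rec(2) a2 by (simp add: field_simps power2_eq_square)
  finally show a3: "taylor_coeff f 3 = taylor_coeff w 2 / 4 + taylor_coeff w 1 ^ 2 / 12" .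
  have "taylor_coeff f 4 = (3 * taylor_coeff f 4) / 3"
    by simp
  also have "\<dots> = taylor_coeff w 3 / 6 + 5/72 * taylor_coeff w 1 * taylor_coeff w 2
                   + taylor_coeff w 1 ^ 3 / 72"
    unfolding rec(3) a2 a3 by (simp add: field_simps power2_eq_square power3_eq_cube)
  finally show "taylor_coeff f 4 = taylor_coeff w 3 / 6 + 5/72 * taylor_coeff w 1 * taylor_coeff w 2
                                    + taylor_coeff w 1 ^ 3 / 72" .
qed

lemma SG_star_taylor_coeffs:
  assumes "SG_star f"
  obtains w where "schwarz_function w"
    "taylor_coeff f 2 = taylor_coeff w 1 / 2"
    "taylor_coeff f 3 = taylor_coeff w 2 / 4 + taylor_coeff w 1 ^ 2 / 12"
    "taylor_coeff f 4 = taylor_coeff w 3 / 6 + 5/72 * taylor_coeff w 1 * taylor_coeff w 2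
                          + taylor_coeff w 1 ^ 3 / 72"
proof -
  obtain w where "classS f" "schwarz_function w" "\<forall>z\<in>unit_disc. starlike_quot f z = Psi (w z)"
    using assms unfolding SG_star_iff_schwarz_function by blast
  then show ?thesis
    using that taylor_coeffs_of_Psi_subordinate by blast
qed

section \<open>Coefficient estimates\<close>

lemma norm_diff_diff_le:
  fixes a b c :: "'a::real_normed_vector"
  shows "norm (a - b - c) \<le> norm a + norm b + norm c"
  using norm_triangle_ineq4[of "a - b" c] norm_triangle_ineq4[of a b] by linarith

lemma real_estimate_a2a3_minus_a4:
  fixes x y :: real
  assumes "0 \<le> x" "x \<le> 1"
  shows "x * y / 3 + x ^ 3 / 6 \<le> x ^ 2 + y ^ 2 / (1 + x)"
proof -
  have "0 \<le> (y - x * (1 + x) / 6) ^ 2"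
    by simp
  then have "x * y / 3 - x ^ 2 * (1 + x) / 36 \<le> y ^ 2 / (1 + x)"
    using assms by (simp add: field_simps power2_eq_square)
  moreover have "x ^ 3 \<le> x ^ 2" "0 \<le> x ^ 3"
    using assms by (simp_all add: power_decreasing)
  moreover have "x ^ 2 * (1 + x) = x ^ 2 + x ^ 3"
    by (simp add: algebra_simps power2_eq_square power3_eq_cube)
  ultimately show ?thesis
    by linarith
qed

lemma real_estimate_second_hankel:
  fixes x y z :: real
  assumes x: "0 \<le> x" "x \<le> 1" and y: "0 \<le> y" "y \<le> 1 - x ^ 2"
    and z: "z \<le> 1 - x ^ 2 - y ^ 2 / (1 + x)"
  shows "x * z / 12 + y ^ 2 / 16 + x ^ 2 * y / 144 \<le> 1/16"
proof -
  define A where "A = 1/16 - x / (12 * (1 + x))"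
  have "0 \<le> A"
    using x unfolding A_def by (simp add: field_simps)
  have "x * z / 12 \<le> x * (1 - x ^ 2 - y ^ 2 / (1 + x)) / 12"
    using x z by (simp add: mult_left_mono)
  then have "x * z / 12 + y ^ 2 / 16 + x ^ 2 * y / 144 \<le> x * (1 - x ^ 2) / 12 + A * y ^ 2 + x ^ 2 * y / 144"
    using x by (simp add: A_def field_simps)
  also have "\<dots> \<le> x * (1 - x ^ 2) / 12 + A * (1 - x ^ 2) ^ 2 + x ^ 2 * (1 - x ^ 2) / 144"
    using \<open>0 \<le> A\<close> x y by (intro add_mono mult_left_mono divide_right_mono power_mono) auto
  also have "\<dots> = 1/16 - x ^ 2 * (5 + 4 * x ^ 2) / 144"
    using x unfolding A_def by (simp add: field_simps power2_eq_square)
  also have "\<dots> \<le> 1/16"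
    by simp
  finally show ?thesis .
qed

lemma SG_star_fekete_szego:
  assumes "SG_star f"
  shows "norm (taylor_coeff f 3 - \<mu> * taylor_coeff f 2 ^ 2) \<le> 1/4 * max 1 (norm (\<mu> - 1/3))"
proof -
  obtain w where w: "schwarz_function w" and a: "taylor_coeff f 2 = taylor_coeff w 1 / 2"
    "taylor_coeff f 3 = taylor_coeff w 2 / 4 + taylor_coeff w 1 ^ 2 / 12"
    "taylor_coeff f 4 = taylor_coeff w 3 / 6 + 5/72 * taylor_coeff w 1 * taylor_coeff w 2
                          + taylor_coeff w 1 ^ 3 / 72"
    by (rule SG_star_taylor_coeffs[OF assms])
  have eq: "taylor_coeff f 3 - \<mu> * taylor_coeff f 2 ^ 2
             = 1/4 * (taylor_coeff w 2 - (\<mu> - 1/3) * taylor_coeff w 1 ^ 2)"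
    unfolding a by (simp add: field_simps power2_eq_square)
  have "norm (taylor_coeff f 3 - \<mu> * taylor_coeff f 2 ^ 2)
               = 1/4 * norm (taylor_coeff w 2 - (\<mu> - 1/3) * taylor_coeff w 1 ^ 2)"
    unfolding eq norm_mult by simp
  also have "\<dots> \<le> 1/4 * max 1 (norm (\<mu> - 1/3))"
    using schwarz_function_fekete_szego[OF w] by (intro mult_left_mono) auto
  finally show ?thesis .
qed

lemma SG_star_a2a3_minus_a4:
  assumes "SG_star f"
  shows "norm (taylor_coeff f 2 * taylor_coeff f 3 - taylor_coeff f 4) \<le> 1/6"
proof -
  obtain w where w: "schwarz_function w" and a: "taylor_coeff f 2 = taylor_coeff w 1 / 2"
    "taylor_coeff f 3 = taylor_coeff w 2 / 4 + taylor_coeff w 1 ^ 2 / 12"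
    "taylor_coeff f 4 = taylor_coeff w 3 / 6 + 5/72 * taylor_coeff w 1 * taylor_coeff w 2
                          + taylor_coeff w 1 ^ 3 / 72"
    by (rule SG_star_taylor_coeffs[OF assms])
  define c1 c2 c3 where "c1 = taylor_coeff w 1" and "c2 = taylor_coeff w 2"
    and "c3 = taylor_coeff w 3"
  define x y where "x = norm c1" and "y = norm c2"
  have "0 \<le> x" "x \<le> 1"
    using norm_taylor_coeff_1_le[OF w] by (simp_all add: x_def c1_def)
  have eq: "taylor_coeff f 2 * taylor_coeff f 3 - taylor_coeff f 4
             = - (c3 - c1 * c2 / 3 - c1 ^ 3 / 6) / 6"
    unfolding a c1_def c2_def c3_def by (simp add: field_simps power2_eq_square power3_eq_cube)
  have "norm (taylor_coeff f 2 * taylor_coeff f 3 - taylor_coeff f 4)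
               = norm (c3 - c1 * c2 / 3 - c1 ^ 3 / 6) / 6"
    unfolding eq norm_divide norm_minus_cancel by simp
  also have "\<dots> \<le> (norm c3 + x * y / 3 + x ^ 3 / 6) / 6"
    using norm_diff_diff_le[of c3 "c1 * c2 / 3" "c1 ^ 3 / 6"]
    by (simp add: norm_mult norm_divide norm_power x_def y_def)
  also have "\<dots> \<le> 1/6"
    using schwarz_function_taylor_coeff_3_le[OF w] real_estimate_a2a3_minus_a4[OF \<open>0 \<le> x\<close> \<open>x \<le> 1\<close>, of y]
    by (simp add: x_def y_def c1_def c2_def c3_def)
  finally show ?thesis .
qed

lemma SG_star_second_hankel:
  assumes "SG_star f"
  shows "norm (taylor_coeff f 2 * taylor_coeff f 4 - taylor_coeff f 3 ^ 2) \<le> 1/16"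
proof -
  obtain w where w: "schwarz_function w" and a: "taylor_coeff f 2 = taylor_coeff w 1 / 2"
    "taylor_coeff f 3 = taylor_coeff w 2 / 4 + taylor_coeff w 1 ^ 2 / 12"
    "taylor_coeff f 4 = taylor_coeff w 3 / 6 + 5/72 * taylor_coeff w 1 * taylor_coeff w 2
                          + taylor_coeff w 1 ^ 3 / 72"
    by (rule SG_star_taylor_coeffs[OF assms])
  define c1 c2 c3 where "c1 = taylor_coeff w 1" and "c2 = taylor_coeff w 2"
    and "c3 = taylor_coeff w 3"
  define x y where "x = norm c1" and "y = norm c2"
  have "0 \<le> x" "x \<le> 1"
    using norm_taylor_coeff_1_le[OF w] by (simp_all add: x_def c1_def)
  have "0 \<le> y" "y \<le> 1 - x ^ 2"
    using schwarz_function_taylor_coeff_2_le[OF w] by (simp_all add: x_def y_def c1_def c2_def)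
  have "taylor_coeff f 2 * taylor_coeff f 4 - taylor_coeff f 3 ^ 2
          = c1 * c3 / 12 - c2 ^ 2 / 16 - c1 ^ 2 * c2 / 144"
    unfolding a c1_def c2_def c3_def by (simp add: field_simps power2_eq_square power3_eq_cube)
  then have "norm (taylor_coeff f 2 * taylor_coeff f 4 - taylor_coeff f 3 ^ 2)
               \<le> x * norm c3 / 12 + y ^ 2 / 16 + x ^ 2 * y / 144"
    using norm_diff_diff_le[of "c1 * c3 / 12" "c2 ^ 2 / 16" "c1 ^ 2 * c2 / 144"]
    by (simp add: norm_mult norm_divide norm_power x_def y_def)
  also have "\<dots> \<le> 1/16"
    using schwarz_function_taylor_coeff_3_le[OF w]
    by (intro real_estimate_second_hankel \<open>0 \<le> x\<close> \<open>x \<le> 1\<close> \<open>0 \<le> y\<close> \<open>y \<le> 1 - x ^ 2\<close>)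
      (simp add: x_def y_def c1_def c2_def c3_def)
  finally show ?thesis .
qed

section \<open>Extremal functions\<close>

lemma Re_inverse_pos: "0 < Re q \<Longrightarrow> 0 < Re (inverse q)"
  by (simp add: add_pos_nonneg)

lemma Re_1_plus_pos: "norm (z::complex) < 1 \<Longrightarrow> 0 < Re (1 + z)"
  using abs_Re_le_cmod[of z] by auto

lemma one_plus_notin_nonpos_Reals: "norm (z::complex) < 1 \<Longrightarrow> 1 + z \<notin> \<real>\<^sub>\<le>\<^sub>0"
  using Re_1_plus_pos[of z] by (auto simp: complex_nonpos_Reals_iff)

lemma Psi_holomorphic: "Psi holomorphic_on unit_disc"
proof -
  obtain S where S: "open S" "0 \<in> S" "Psi holomorphic_on S"
    using has_fps_expansion_imp_holomorphic[OF has_fps_expansion_Psi] by metis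
  have "(\<lambda>z. z / Ln (1 + z)) holomorphic_on unit_disc - {0}"
  proof (intro holomorphic_intros)
    fix z assume "z \<in> unit_disc - {0}"
    then have z: "norm z < 1" "z \<noteq> 0"
      by (auto simp: unit_disc_def)
    then show "1 + z \<notin> \<real>\<^sub>\<le>\<^sub>0" and "Ln (1 + z) \<noteq> 0"
      using one_plus_notin_nonpos_Reals[OF z(1)] by auto
  qed
  then have "Psi holomorphic_on unit_disc - {0}"
    by (rule holomorphic_transform) (simp add: Psi_def)
  with S have "Psi holomorphic_on S \<union> (unit_disc - {0})"
    by (intro holomorphic_on_Un) (auto simp: unit_disc_def)
  then show ?thesis
    by (rule holomorphic_on_subset) (use S in auto)
qed

(* Mean value theorem on [0, z]: Re (Ln (1 + z) / z) = Re (1 / (1 + u)) for some u on the segment. *)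
lemma Re_Ln_1_plus_div_pos:
  assumes z: "norm z < 1" "z \<noteq> 0"
  shows "0 < Re (Ln (1 + z) / z)"
proof -
  have seg: "norm u < 1" if "u \<in> closed_segment 0 z" for u
    using closed_segment_subset[of 0 "ball 0 1" z] z that by auto
  have der: "((\<lambda>u. Ln (1 + u) / z) has_field_derivative inverse (1 + u) / z) (at u)"
    if "u \<in> closed_segment 0 z" for u
    using one_plus_notin_nonpos_Reals[OF seg[OF that]] z(2)
    by (auto intro!: derivative_eq_intros)
  obtain u where u: "u \<in> closed_segment 0 z"
    "Re (Ln (1 + z) / z) - Re (Ln (1 + 0) / z) = Re (inverse (1 + u) / z * (z - 0))"
    using complex_mvt_line[OF der] by blast
  then have "Re (Ln (1 + z) / z) = Re (inverse (1 + u))"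
    using z by simp
  also have "\<dots> > 0"
    by (rule Re_inverse_pos[OF Re_1_plus_pos[OF seg[OF u(1)]]])
  finally show ?thesis .
qed

lemma Re_Psi_pos:
  assumes "norm z < 1" shows "0 < Re (Psi z)"
proof (cases "z = 0")
  case True
  then show ?thesis by (simp add: Psi_def)
next
  case False
  then have "Psi z = inverse (Ln (1 + z) / z)"
    by (simp add: Psi_def)
  then show ?thesis
    using Re_inverse_pos[OF Re_Ln_1_plus_div_pos[OF assms False]] by simp
qed

lemma inj_on_Re_deriv_pos:
  fixes g g' :: "complex \<Rightarrow> complex"
  assumes "convex S" and g: "\<And>z. z \<in> S \<Longrightarrow> (g has_field_derivative g' z) (at z)"
    and pos: "\<And>z. z \<in> S \<Longrightarrow> 0 < Re (g' z)"
  shows "inj_on g S"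
proof (rule inj_onI, rule ccontr)
  fix a b assume ab: "a \<in> S" "b \<in> S" "g a = g b" "a \<noteq> b"
  have seg: "closed_segment a b \<subseteq> S"
    using assms(1) ab closed_segment_subset by blast
  have der: "((\<lambda>z. g z / (b - a)) has_field_derivative g' u / (b - a)) (at u)"
    if "u \<in> closed_segment a b" for u
    using g[of u] seg that ab(4) by (auto intro!: derivative_eq_intros)
  obtain u where u: "u \<in> closed_segment a b"
    "Re (g b / (b - a)) - Re (g a / (b - a)) = Re (g' u / (b - a) * (b - a))"
    using complex_mvt_line[OF der] by blast
  then have "Re (g' u) = 0"
    using ab by simp
  with pos[of u] seg u(1) show False
    by auto
qed

(* In the coordinate z = exp \<zeta> with Re \<zeta> < 0 the map becomes exp (\<zeta> + H (exp \<zeta>)), and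
   \<zeta> + H (exp \<zeta>) has derivative 1 + z q z; the period 2 pi i of exp is absorbed by shifting \<zeta>. *)
lemma inj_on_mult_exp:
  assumes H: "\<And>z. z \<in> unit_disc \<Longrightarrow> (H has_field_derivative q z) (at z)"
    and pos: "\<And>z. z \<in> unit_disc \<Longrightarrow> 0 < Re (1 + z * q z)"
  shows "inj_on (\<lambda>z. z * exp (H z)) unit_disc"
proof (rule inj_onI)
  define L where "L = {\<zeta>::complex. Re \<zeta> < 0}"
  define g where "g = (\<lambda>\<zeta>. \<zeta> + H (exp \<zeta>))"
  have exp_L: "exp \<zeta> \<in> unit_disc" if "\<zeta> \<in> L" for \<zeta>
    using that by (simp add: L_def unit_disc_def)
  have "(g has_field_derivative 1 + exp \<zeta> * q (exp \<zeta>)) (at \<zeta>)" if "\<zeta> \<in> L" for \<zeta>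
    unfolding g_def using DERIV_chain2[OF H[OF exp_L[OF that]] DERIV_exp]
    by (auto intro!: derivative_eq_intros simp: mult.commute)
  then have inj_g: "inj_on g L"
    using pos exp_L by (intro inj_on_Re_deriv_pos[of L]) (auto simp: L_def convex_halfspace_Re_lt)
  fix z1 z2 assume z: "z1 \<in> unit_disc" "z2 \<in> unit_disc" "z1 * exp (H z1) = z2 * exp (H z2)"
  show "z1 = z2"
  proof (cases "z1 = 0 \<or> z2 = 0")
    case True
    then show ?thesis using z(3) by auto
  next
    case False
    then have L: "Ln z1 \<in> L" "Ln z2 \<in> L"
      using z(1,2) by (auto simp: L_def unit_disc_def)
    have "exp (g (Ln z1)) = exp (g (Ln z2))"
      using z(3) False by (simp add: g_def exp_add)
    then obtain n :: int where n: "g (Ln z1) = g (Ln z2) + of_int (2 * n) * pi * \<i>"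
      by (auto simp: exp_eq)
    define \<zeta> where "\<zeta> = Ln z2 + of_int (2 * n) * pi * \<i>"
    have "exp \<zeta> = z2"
      using exp_eq[of \<zeta> "Ln z2"] False by (auto simp: \<zeta>_def)
    moreover have "\<zeta> \<in> L"
      using L by (simp add: \<zeta>_def L_def)
    moreover have "g \<zeta> = g (Ln z1)"
      using n \<open>exp \<zeta> = z2\<close> by (simp add: g_def \<zeta>_def algebra_simps)
    ultimately have "\<zeta> = Ln z1"
      using inj_g L by (auto dest: inj_onD)
    with \<open>exp \<zeta> = z2\<close> False show ?thesis
      by auto
  qed
qed

(* The witness is f z = z exp (\<integral>\<^sub>0\<^sup>z (p t - 1) / t dt). *)
lemma exists_classS_with_starlike_quot:
  assumes holo: "p holomorphic_on unit_disc" and "p 0 = 1"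
    and pos: "\<And>z. z \<in> unit_disc \<Longrightarrow> 0 < Re (p z)"
  obtains f where "classS f" "\<And>z. z \<in> unit_disc \<Longrightarrow> starlike_quot f z = p z"
proof -
  define q where "q = (\<lambda>z. if z = 0 then deriv p 0 else (p z - p 0) / (z - 0))"
  have "q holomorphic_on unit_disc"
    unfolding q_def unit_disc_def by (rule pole_lemma[OF holo[unfolded unit_disc_def]]) auto
  then obtain H0 where H0: "\<And>z. z \<in> ball 0 1 \<Longrightarrow> (H0 has_field_derivative q z) (at z within ball 0 1)"
    using holomorphic_convex_primitive'[OF convex_ball open_ball] unfolding unit_disc_def by metis
  define H where "H = (\<lambda>z. H0 z - H0 0)"
  have H: "(H has_field_derivative q z) (at z)" if "z \<in> unit_disc" for z
    using H0[of z] that unfolding H_def unit_disc_def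
    by (auto simp: at_within_open[OF _ open_ball] intro!: derivative_eq_intros)
  have p_eq: "p z = 1 + z * q z" for z
    by (simp add: q_def \<open>p 0 = 1\<close>)
  define f where "f = (\<lambda>z. z * exp (H z))"
  have f': "(f has_field_derivative p z * exp (H z)) (at z)" if "z \<in> unit_disc" for z
    unfolding f_def p_eq using H[OF that] by (auto intro!: derivative_eq_intros simp: algebra_simps)
  have "classS f"
    unfolding classS_def
  proof (intro conjI)
    show "f holomorphic_on unit_disc"
      unfolding holomorphic_on_open[OF open_unit_disc] using f' by blast
    show "inj_on f unit_disc"
      unfolding f_def using H pos by (intro inj_on_mult_exp) (auto simp: p_eq)
    show "f 0 = 0" and "deriv f 0 = 1"
      using DERIV_imp_deriv[OF f'[of 0]] \<open>p 0 = 1\<close> by (auto simp: f_def H_def unit_disc_def)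
  qed
  moreover have "starlike_quot f z = p z" if "z \<in> unit_disc" for z
    using DERIV_imp_deriv[OF f'[OF that]] \<open>p 0 = 1\<close> by (simp add: starlike_quot_def f_def)
  ultimately show ?thesis
    using that by blast
qed

lemma taylor_coeff_power: "taylor_coeff (\<lambda>z. z ^ k) n = of_bool (k = n)"
  using taylor_coeff_eq_fps_nth[OF has_fps_expansion_fps_X_power[of k]]
  by simp

lemma SG_star_extremal:
  fixes k :: nat
  assumes "k \<ge> 1"
  obtains f where "SG_star f" "taylor_coeff f 2 = of_bool (k = 1) / 2"
    "taylor_coeff f 3 = of_bool (k = 2) / 4 + of_bool (k = 1) / 12"
    "taylor_coeff f 4 = of_bool (k = 3) / 6 + of_bool (k = 1) / 72"
proof -
  have disc: "norm (z ^ k) < 1" if "z \<in> unit_disc" for z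
    using that \<open>k \<ge> 1\<close> by (simp add: unit_disc_def norm_power power_less_one_iff)
  have w: "schwarz_function (\<lambda>z. z ^ k)"
    using disc \<open>k \<ge> 1\<close> by (auto simp: schwarz_function_def unit_disc_def intro!: holomorphic_intros)
  have "(Psi \<circ> (\<lambda>z. z ^ k)) holomorphic_on unit_disc"
    using disc by (intro holomorphic_on_compose_gen[OF _ Psi_holomorphic])
      (auto intro!: holomorphic_intros simp: unit_disc_def)
  then have p: "(\<lambda>z. Psi (z ^ k)) holomorphic_on unit_disc"
    by (simp add: o_def)
  have p0: "Psi (0 ^ k) = 1"
    using \<open>k \<ge> 1\<close> by (simp add: Psi_def)
  obtain f where f: "classS f" and "\<And>z. z \<in> unit_disc \<Longrightarrow> starlike_quot f z = Psi (z ^ k)"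
    using exists_classS_with_starlike_quot[OF p p0 Re_Psi_pos[OF disc]] by blast
  then have quot: "\<forall>z\<in>unit_disc. starlike_quot f z = Psi (z ^ k)"
    by blast
  have "SG_star f"
    unfolding SG_star_iff_schwarz_function using f w quot by blast
  moreover note taylor_coeffs_of_Psi_subordinate[OF f w quot, unfolded taylor_coeff_power]
  ultimately show ?thesis
    by (cases "k = 1") (auto intro: that)
qed

lemma SG_star_fekete_szego_sharp:
  "\<exists>f. SG_star f \<and>
     norm (taylor_coeff f 3 - \<mu> * taylor_coeff f 2 ^ 2) = 1/4 * max 1 (norm (\<mu> - 1/3))"
proof (cases "1 \<le> norm (\<mu> - 1/3)")
  case True
  obtain f where f: "SG_star f" "taylor_coeff f 2 = 1/2" "taylor_coeff f 3 = 1/12"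
    using SG_star_extremal[of 1] by auto
  have "taylor_coeff f 3 - \<mu> * taylor_coeff f 2 ^ 2 = - (\<mu> - 1/3) / 4"
    unfolding f by (simp add: field_simps power2_eq_square)
  then have "norm (taylor_coeff f 3 - \<mu> * taylor_coeff f 2 ^ 2) = norm (\<mu> - 1/3) / 4"
    by (simp only: norm_divide norm_minus_cancel) simp
  then show ?thesis
    using f(1) True by (intro exI[of _ f]) simp
next
  case False
  obtain f where f: "SG_star f" "taylor_coeff f 2 = 0" "taylor_coeff f 3 = 1/4"
    using SG_star_extremal[of 2] by auto
  show ?thesis
    using False by (intro exI[of _ f]) (simp add: f max_def)
qed

theorem theorem2:
  shows "(\<forall>f. SG_star f \<longrightarrow>
            (\<forall>\<mu>::complex. norm (taylor_coeff f 3 - \<mu> * (taylor_coeff f 2)^2)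
                 \<le> (1/4) * max 1 (norm (\<mu> - 1/3))) \<and>
            norm (taylor_coeff f 2 * taylor_coeff f 3 - taylor_coeff f 4) \<le> 1/6 \<and>
            norm (taylor_coeff f 2 * taylor_coeff f 4 - (taylor_coeff f 3)^2) \<le> 1/16)
       \<and> (\<forall>\<mu>::complex. \<exists>f. SG_star f \<and>
            norm (taylor_coeff f 3 - \<mu> * (taylor_coeff f 2)^2) = (1/4) * max 1 (norm (\<mu> - 1/3)))
       \<and> (\<exists>f. SG_star f \<and> norm (taylor_coeff f 2 * taylor_coeff f 3 - taylor_coeff f 4) = 1/6)
       \<and> (\<exists>f. SG_star f \<and> norm (taylor_coeff f 2 * taylor_coeff f 4 - (taylor_coeff f 3)^2) = 1/16)"
proof -
  obtain f2 where f2: "SG_star f2" "taylor_coeff f2 2 = 0" "taylor_coeff f2 3 = 1/4"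
    "taylor_coeff f2 4 = 0"
    using SG_star_extremal[of 2] by auto
  obtain f3 where f3: "SG_star f3" "taylor_coeff f3 2 = 0" "taylor_coeff f3 3 = 0"
    "taylor_coeff f3 4 = 1/6"
    using SG_star_extremal[of 3] by auto
  have "\<exists>f. SG_star f \<and> norm (taylor_coeff f 2 * taylor_coeff f 3 - taylor_coeff f 4) = 1/6"
    by (intro exI[of _ f3]) (simp add: f3)
  moreover have "\<exists>f. SG_star f \<and> norm (taylor_coeff f 2 * taylor_coeff f 4 - taylor_coeff f 3 ^ 2) = 1/16"
    by (intro exI[of _ f2]) (simp add: f2 power2_eq_square)
  ultimately show ?thesis
    using SG_star_fekete_szego SG_star_a2a3_minus_a4 SG_star_second_hankel SG_star_fekete_szego_sharp
    by (intro conjI allI impI) blast+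
qed

end
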